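(* Let $T_M$ be a persistent phylogeny solving a maximal reducible graph $G_M$. Then $T_M$ can be transformed into a persistent phylogeny $T'_M$ that solves $G_M$ and is in normal form.
   Context: Persistent phylogeny. Let $M$ be a binary matrix with rows indexed by species $S$ and columns by characters $C=\{c_1,\dots,c_m\}$, and $A\subseteq C$ (active characters). A persistent phylogeny for $(M,A)$ is a rooted tree $T$ whose nodes $x$ carry vectors $l_x\in\{0,1\}^m$ (the state of $x$) such that: the root $r$ has $l_r[j]=1$ iff $c_j\in A$; each edge is labelled $c_j^+$ for each character changing from 0 to 1 on it and $c_j^-$ for each changing from 1 to 0; each character changes state on at most two edges, and if on two, they lie on one root-to-leaf path with the gain $c_j^+$ closer to the root than the loss $c_j^-$; each row of $M$ equals $l_x$ for some node $x$. A path whose internal nodes have in- and out-degree one may be contracted into a single edge labelled by the sequence of characters on it. Red-black graphs. A red-black graph on species $S$ and characters $C$ is a bipartite graph on $S\cup C$ with red or black edges, each character incident only to black edges (inactive) or only to red edges (active). Its associated matrix has $M[s,c]=1$ iff $(s,c)$ is black, or $c$ is active and $(s,c)$ is not an edge; a tree solving the graph is a persistent phylogeny for (associated matrix, set of active characters). $S(c)=\{s:M[s,c]=1\}$. Realizing $c^+$ ($c$ inactive): with $D(c)$ the species of the component of $c$, add red edges from $c$ to $D(c)\setminus N(c)$, delete black edges on $c$ and isolated vertices; realizing $c^-$ ($c$ active, $D(c)\subseteq N(c)$): delete all edges on $c$ and isolated vertices. An active character red-adjacent to all species is free. A c-reduction $\langle c_1^+,\dots,c_k^+\rangle$ is successful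 if realizing the characters in order is always defined (realizing negatively each character right after it becomes free) and yields the empty graph. A red-black graph is reducible if it is connected and admits a successful reduction (i.e. is solved by some persistent phylogeny). Standing assumption: no free, null (isolated) or universal (inactive and black-adjacent to all species) characters, no species with no characters, no two identical character columns. An inactive character $c$ is maximal if no inactive $c'$ has $S(c)\subsetneq S(c')$. A maximal reducible graph is a reducible red-black graph all of whose characters are inactive and maximal. Normal form. A tree is in normal form if it does not have two consecutive edges $e_1,e_2$ labelled by $c^+$ and $c^-$ respectively, for some character $c$. *)

theory Defs
  imports Main
begin

record ('s, 'c) rbgraph =
  species :: "'s set"
  chars   :: "'c set"
  black   :: "('s \<times> 'c) set"
  red     :: "('s \<times> 'c) set"

definition edges :: "('s, 'c) rbgraph \<Rightarrow> ('s \<times> 'c) set" where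
  "edges G = black G \<union> red G"

definition wf_rbgraph :: "('s, 'c) rbgraph \<Rightarrow> bool" where
  "wf_rbgraph G \<longleftrightarrow> finite (species G) \<and> finite (chars G) \<and>
     edges G \<subseteq> species G \<times> chars G \<and>
     (\<forall>c \<in> chars G. \<not> ((\<exists>s. (s, c) \<in> black G) \<and> (\<exists>s. (s, c) \<in> red G)))"

definition active :: "('s, 'c) rbgraph \<Rightarrow> 'c \<Rightarrow> bool" where
  "active G c \<longleftrightarrow> c \<in> chars G \<and> (\<exists>s. (s, c) \<in> red G)"

definition inactive :: "('s, 'c) rbgraph \<Rightarrow> 'c \<Rightarrow> bool" where
  "inactive G c \<longleftrightarrow> c \<in> chars G \<and> (\<forall>s. (s, c) \<notin> red G)"

definition active_set :: "('s, 'c) rbgraph \<Rightarrow> 'c set" where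
  "active_set G = {c. active G c}"

definition assoc_matrix :: "('s, 'c) rbgraph \<Rightarrow> 's \<Rightarrow> 'c \<Rightarrow> bool" where
  "assoc_matrix G s c \<longleftrightarrow> (s, c) \<in> black G \<or> (active G c \<and> (s, c) \<notin> red G)"

definition Sc :: "('s, 'c) rbgraph \<Rightarrow> 'c \<Rightarrow> 's set" where
  "Sc G c = {s \<in> species G. assoc_matrix G s c}"

definition Nc :: "('s, 'c) rbgraph \<Rightarrow> 'c \<Rightarrow> 's set" where
  "Nc G c = {s. (s, c) \<in> edges G}"

definition adj :: "('s, 'c) rbgraph \<Rightarrow> ('s + 'c) rel" where
  "adj G = {(Inl s, Inr c) | s c. (s, c) \<in> edges G} \<union> {(Inr c, Inl s) | s c. (s, c) \<in> edges G}"

definition vertices :: "('s, 'c) rbgraph \<Rightarrow> ('s + 'c) set" where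
  "vertices G = Inl ` species G \<union> Inr ` chars G"

definition rb_connected :: "('s, 'c) rbgraph \<Rightarrow> bool" where
  "rb_connected G \<longleftrightarrow> (\<forall>u \<in> vertices G. \<forall>v \<in> vertices G. (u, v) \<in> (adj G)\<^sup>*)"

definition Dc :: "('s, 'c) rbgraph \<Rightarrow> 'c \<Rightarrow> 's set" where
  "Dc G c = {s \<in> species G. (Inr c, Inl s) \<in> (adj G)\<^sup>*}"

definition del_isolated :: "('s, 'c) rbgraph \<Rightarrow> ('s, 'c) rbgraph" where
  "del_isolated G = G\<lparr> species := {s \<in> species G. \<exists>c. (s, c) \<in> edges G},
                       chars := {c \<in> chars G. \<exists>s. (s, c) \<in> edges G} \<rparr>"

text \<open>Realizing c+ (defined when c is inactive).\<close>
definition realize_plus :: "('s, 'c) rbgraph \<Rightarrow> 'c \<Rightarrow> ('s, 'c) rbgraph" where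
  "realize_plus G c = del_isolated (G\<lparr>
      black := {e \<in> black G. snd e \<noteq> c},
      red := red G \<union> {(s, c) | s. s \<in> Dc G c - Nc G c} \<rparr>)"

text \<open>Realizing c- (defined when c is active and D(c) is contained in N(c)).\<close>
definition realize_minus :: "('s, 'c) rbgraph \<Rightarrow> 'c \<Rightarrow> ('s, 'c) rbgraph" where
  "realize_minus G c = del_isolated (G\<lparr>
      black := {e \<in> black G. snd e \<noteq> c},
      red := {e \<in> red G. snd e \<noteq> c} \<rparr>)"

definition free_char :: "('s, 'c) rbgraph \<Rightarrow> 'c \<Rightarrow> bool" where
  "free_char G c \<longleftrightarrow> active G c \<and> (\<forall>s \<in> species G. (s, c) \<in> red G)"

definition null_char :: "('s, 'c) rbgraph \<Rightarrow> 'c \<Rightarrow> bool" where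
  "null_char G c \<longleftrightarrow> c \<in> chars G \<and> (\<forall>s. (s, c) \<notin> edges G)"

definition universal_char :: "('s, 'c) rbgraph \<Rightarrow> 'c \<Rightarrow> bool" where
  "universal_char G c \<longleftrightarrow> inactive G c \<and> (\<forall>s \<in> species G. (s, c) \<in> black G)"

definition is_empty_graph :: "('s, 'c) rbgraph \<Rightarrow> bool" where
  "is_empty_graph G \<longleftrightarrow> species G = {} \<and> chars G = {} \<and> black G = {} \<and> red G = {}"

inductive free_closure :: "('s, 'c) rbgraph \<Rightarrow> ('s, 'c) rbgraph \<Rightarrow> bool" where
  fc_stop: "(\<forall>c. \<not> free_char G c) \<Longrightarrow> free_closure G G"
| fc_step: "free_char G c \<Longrightarrow> Dc G c \<subseteq> Nc G c \<Longrightarrow>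
            free_closure (realize_minus G c) G' \<Longrightarrow> free_closure G G'"

inductive reduction_run :: "('s, 'c) rbgraph \<Rightarrow> 'c list \<Rightarrow> ('s, 'c) rbgraph \<Rightarrow> bool" where
  rr_nil: "reduction_run G [] G"
| rr_cons: "inactive G c \<Longrightarrow> free_closure (realize_plus G c) G1 \<Longrightarrow>
            reduction_run G1 cs G2 \<Longrightarrow> reduction_run G (c # cs) G2"

definition successful_reduction :: "('s, 'c) rbgraph \<Rightarrow> 'c list \<Rightarrow> bool" where
  "successful_reduction G cs \<longleftrightarrow> (\<exists>G'. reduction_run G cs G' \<and> is_empty_graph G')"

definition reducible :: "('s, 'c) rbgraph \<Rightarrow> bool" where
  "reducible G \<longleftrightarrow> rb_connected G \<and> (\<exists>cs. successful_reduction G cs)"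

definition standing_assumptions :: "('s, 'c) rbgraph \<Rightarrow> bool" where
  "standing_assumptions G \<longleftrightarrow>
     (\<forall>c. \<not> free_char G c) \<and> (\<forall>c. \<not> null_char G c) \<and> (\<forall>c. \<not> universal_char G c) \<and>
     (\<forall>s \<in> species G. \<exists>c. (s, c) \<in> edges G) \<and>
     (\<forall>c \<in> chars G. \<forall>c' \<in> chars G. c \<noteq> c' \<longrightarrow>
        (\<exists>s \<in> species G. assoc_matrix G s c \<noteq> assoc_matrix G s c'))"

definition maximal_char :: "('s, 'c) rbgraph \<Rightarrow> 'c \<Rightarrow> bool" where
  "maximal_char G c \<longleftrightarrow> inactive G c \<and> \<not> (\<exists>c'. inactive G c' \<and> Sc G c \<subset> Sc G c')"

definition maximal_reducible :: "('s, 'c) rbgraph \<Rightarrow> bool" where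
  "maximal_reducible G \<longleftrightarrow> reducible G \<and> (\<forall>c \<in> chars G. inactive G c \<and> maximal_char G c)"

text \<open>Rooted ordered trees whose nodes carry states: the state of a node is the set of
  characters having value 1 there.\<close>
datatype 'c ptree = Node "'c set" "'c ptree list"

fun subtree_at :: "'c ptree \<Rightarrow> nat list \<Rightarrow> 'c ptree option" where
  "subtree_at t [] = Some t"
| "subtree_at (Node l ts) (i # p) = (if i < length ts then subtree_at (ts ! i) p else None)"

definition positions :: "'c ptree \<Rightarrow> nat list set" where
  "positions t = {p. subtree_at t p \<noteq> None}"

fun state_of :: "'c ptree \<Rightarrow> 'c set" where
  "state_of (Node l ts) = l"

definition st :: "'c ptree \<Rightarrow> nat list \<Rightarrow> 'c set" where
  "st t p = state_of (the (subtree_at t p))"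

text \<open>Edges are identified with the positions p \<noteq> [] of their lower endpoint;
  the upper endpoint is butlast p.\<close>
definition tree_edges :: "'c ptree \<Rightarrow> nat list set" where
  "tree_edges t = {p \<in> positions t. p \<noteq> []}"

definition gain_edges :: "'c ptree \<Rightarrow> 'c \<Rightarrow> nat list set" where
  "gain_edges t c = {p \<in> tree_edges t. c \<notin> st t (butlast p) \<and> c \<in> st t p}"

definition loss_edges :: "'c ptree \<Rightarrow> 'c \<Rightarrow> nat list set" where
  "loss_edges t c = {p \<in> tree_edges t. c \<in> st t (butlast p) \<and> c \<notin> st t p}"

definition edge_labels :: "'c ptree \<Rightarrow> nat list \<Rightarrow> 'c set" where
  "edge_labels t p = (st t (butlast p) - st t p) \<union> (st t p - st t (butlast p))"

definition persistent_phylogeny ::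
  "'s set \<Rightarrow> 'c set \<Rightarrow> ('s \<Rightarrow> 'c \<Rightarrow> bool) \<Rightarrow> 'c set \<Rightarrow> 'c ptree \<Rightarrow> bool" where
  "persistent_phylogeny S C M A t \<longleftrightarrow>
     (\<forall>p \<in> positions t. st t p \<subseteq> C) \<and>
     st t [] = A \<and>
     (\<forall>p \<in> tree_edges t. card (edge_labels t p) = 1) \<and>
     (\<forall>c \<in> C. card (gain_edges t c) \<le> 1 \<and> card (loss_edges t c) \<le> 1 \<and>
        (\<forall>g \<in> gain_edges t c. \<forall>l \<in> loss_edges t c. \<exists>q. q \<noteq> [] \<and> l = g @ q)) \<and>
     (\<forall>s \<in> S. \<exists>p \<in> positions t. st t p = {c \<in> C. M s c})"

definition solves :: "'c ptree \<Rightarrow> ('s, 'c) rbgraph \<Rightarrow> bool" where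
  "solves t G \<longleftrightarrow>
     persistent_phylogeny (species G) (chars G) (assoc_matrix G) (active_set G) t"

definition normal_form :: "'c ptree \<Rightarrow> bool" where
  "normal_form t \<longleftrightarrow> \<not> (\<exists>p j c. p \<in> gain_edges t c \<and> p @ [j] \<in> loss_edges t c)"

end

theory Submission
  imports Defs
begin

text \<open>If a gain edge \<open>c\<^sup>+\<close> into a node \<open>v\<close> is immediately followed by a loss edge
  \<open>c\<^sup>-\<close> into a child \<open>w\<close> of \<open>v\<close>, then \<open>w\<close> has the same state as the parent \<open>x\<close> of \<open>v\<close>.
  Deleting \<open>w\<close> and hanging its children directly below \<open>x\<close> keeps the state of every remaining
  node and of its parent, so every edge keeps its label, and the state of \<open>w\<close> is still present
  at \<open>x\<close>; hence the smaller tree is again a persistent phylogeny for the same data. Repeating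
  this terminates in normal form. No property of the red-black graph is needed.\<close>

definition state_at :: "'c ptree \<Rightarrow> nat list \<Rightarrow> 'c set option" where
  "state_at t p = map_option state_of (subtree_at t p)"

lemma state_at_eq_None_iff: "state_at t p = None \<longleftrightarrow> p \<notin> positions t"
  by (simp add: state_at_def positions_def)

lemma state_at_position: "p \<in> positions t \<Longrightarrow> state_at t p = Some (st t p)"
  by (auto simp: state_at_def positions_def st_def)

lemma subtree_at_append:
  "subtree_at t (p @ q) = (case subtree_at t p of None \<Rightarrow> None | Some u \<Rightarrow> subtree_at u q)"
proof (induction p arbitrary: t)
  case (Cons a p)
  then show ?case by (cases t) auto
qed simp

lemma positions_appendD: "p @ q \<in> positions t \<Longrightarrow> p \<in> positions t"
  by (auto simp: positions_def subtree_at_append split: option.splits)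

lemma butlast_in_positions: "p \<in> positions t \<Longrightarrow> butlast p \<in> positions t"
  by (cases p rule: rev_cases) (auto dest: positions_appendD)

lemma finite_positions: "finite (positions t)"
proof (induction t)
  case (Node l ts)
  have "positions (Node l ts) \<subseteq> insert [] (\<Union>i<length ts. (Cons i) ` positions (ts ! i))"
  proof
    fix p assume "p \<in> positions (Node l ts)"
    then show "p \<in> insert [] (\<Union>i<length ts. (Cons i) ` positions (ts ! i))"
      by (cases p) (auto simp: positions_def split: if_splits)
  qed
  moreover have "finite (insert [] (\<Union>i<length ts. (Cons i) ` positions (ts ! i)))"
    using Node.IH by auto
  ultimately show ?case by (rule finite_subset)
qed

lemma finite_gain_edges: "finite (gain_edges t c)"
  by (rule finite_subset[OF _ finite_positions]) (auto simp: gain_edges_def tree_edges_def)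

lemma finite_loss_edges: "finite (loss_edges t c)"
  by (rule finite_subset[OF _ finite_positions]) (auto simp: loss_edges_def tree_edges_def)

lemma edge_where_property_fails:
  assumes "p \<in> positions t" "P (st t [])" "\<not> P (st t p)"
  obtains e r where "e \<in> tree_edges t" "P (st t (butlast e))" "\<not> P (st t e)" "p = e @ r"
  using assms
proof (induction p arbitrary: thesis rule: rev_induct)
  case (snoc a p)
  show ?case
  proof (cases "P (st t p)")
    case True
    with snoc.prems show ?thesis by (intro snoc.prems(1)[of "p @ [a]" "[]"]) (auto simp: tree_edges_def)
  next
    case False
    with snoc show ?thesis by (metis append_assoc positions_appendD)
  qed
qed simp

section \<open>Pulling back persistent phylogenies along embeddings\<close>

locale tree_embedding =
  fixes T' T :: "'c ptree" and \<phi> :: "nat list \<Rightarrow> nat list"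
  assumes inj: "inj_on \<phi> (positions T')"
    and position: "q \<in> positions T' \<Longrightarrow> \<phi> q \<in> positions T \<and> st T' q = st T (\<phi> q)"
    and edge: "q \<in> tree_edges T' \<Longrightarrow>
      \<phi> q \<in> tree_edges T \<and> st T' (butlast q) = st T (butlast (\<phi> q))"
    and root: "st T' [] = st T []"
begin

lemma edge_labels_eq: "q \<in> tree_edges T' \<Longrightarrow> edge_labels T' q = edge_labels T (\<phi> q)"
  using edge position by (auto simp: edge_labels_def tree_edges_def)

lemma gain_edge_image: "q \<in> gain_edges T' c \<Longrightarrow> \<phi> q \<in> gain_edges T c"
  using edge position by (auto simp: gain_edges_def tree_edges_def)

lemma loss_edge_image: "q \<in> loss_edges T' c \<Longrightarrow> \<phi> q \<in> loss_edges T c"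
  using edge position by (auto simp: loss_edges_def tree_edges_def)

lemma card_gain_edges_le: "card (gain_edges T' c) \<le> card (gain_edges T c)"
proof (rule card_inj_on_le[OF _ _ finite_gain_edges])
  show "inj_on \<phi> (gain_edges T' c)"
    by (rule inj_on_subset[OF inj]) (auto simp: gain_edges_def tree_edges_def)
qed (use gain_edge_image in blast)

lemma card_loss_edges_le: "card (loss_edges T' c) \<le> card (loss_edges T c)"
proof (rule card_inj_on_le[OF _ _ finite_loss_edges])
  show "inj_on \<phi> (loss_edges T' c)"
    by (rule inj_on_subset[OF inj]) (auto simp: loss_edges_def tree_edges_def)
qed (use loss_edge_image in blast)

lemma loss_below_gain:
  assumes pp: "persistent_phylogeny S C M A T" and c: "c \<in> C"
    and g: "g \<in> gain_edges T' c" and l: "l \<in> loss_edges T' c"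
  shows "\<exists>q. q \<noteq> [] \<and> l = g @ q"
proof (cases "c \<in> st T' []")
  case False
  \<comment> \<open>c is gained above l, and g is the only gain edge of c in T'\<close>
  have "butlast l \<in> positions T'" "c \<in> st T' (butlast l)"
    using l butlast_in_positions by (auto simp: loss_edges_def tree_edges_def)
  then obtain e r where e: "e \<in> tree_edges T'" "c \<notin> st T' (butlast e)" "c \<in> st T' e"
      "butlast l = e @ r"
    using False by (elim edge_where_property_fails[where P = "\<lambda>X. c \<notin> X"]) auto
  have "card (gain_edges T' c) \<le> 1"
    using card_gain_edges_le[of c] pp c by (fastforce simp: persistent_phylogeny_def)
  moreover have "e \<in> gain_edges T' c" using e by (auto simp: gain_edges_def)
  ultimately have "e = g" using g finite_gain_edges by (metis One_nat_def card_le_Suc0_iff_eq)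
  moreover have "l \<noteq> []" using l by (auto simp: loss_edges_def tree_edges_def)
  ultimately show ?thesis using e(4)
    by (metis append_butlast_last_id append_assoc append_is_Nil_conv not_Cons_self2)
next
  case True
  \<comment> \<open>then c is lost above the gain edge \<phi> g of T, contradicting persistence of T\<close>
  have gT: "\<phi> g \<in> gain_edges T c" using gain_edge_image g by blast
  then have "butlast (\<phi> g) \<in> positions T" "c \<notin> st T (butlast (\<phi> g))"
    using butlast_in_positions by (auto simp: gain_edges_def tree_edges_def)
  then obtain e r where e: "e \<in> tree_edges T" "c \<in> st T (butlast e)" "c \<notin> st T e"
      "butlast (\<phi> g) = e @ r"
    using True root by (elim edge_where_property_fails[where P = "\<lambda>X. c \<in> X"]) auto
  then have "e \<in> loss_edges T c" by (auto simp: loss_edges_def)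
  then obtain q where "q \<noteq> []" "e = \<phi> g @ q"
    using pp c gT unfolding persistent_phylogeny_def by blast
  then have "length (butlast (\<phi> g)) < length e" by (cases q) auto
  with e(4) show ?thesis by simp
qed

lemma persistent_phylogeny_pullback:
  assumes pp: "persistent_phylogeny S C M A T"
    and cover: "\<And>p. p \<in> positions T \<Longrightarrow> \<exists>q \<in> positions T'. st T' q = st T p"
  shows "persistent_phylogeny S C M A T'"
  unfolding persistent_phylogeny_def
proof (intro conjI ballI)
  show "st T' p \<subseteq> C" if "p \<in> positions T'" for p
    using that position pp by (metis persistent_phylogeny_def)
  show "st T' [] = A" using root pp by (simp add: persistent_phylogeny_def)
  show "card (edge_labels T' p) = 1" if "p \<in> tree_edges T'" for p
    using that edge_labels_eq[OF that] edge pp unfolding persistent_phylogeny_def by metis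
  fix c assume c: "c \<in> C"
  show "card (gain_edges T' c) \<le> 1" "card (loss_edges T' c) \<le> 1"
    using card_gain_edges_le[of c] card_loss_edges_le[of c] pp c
    by (fastforce simp: persistent_phylogeny_def)+
  show "\<exists>q. q \<noteq> [] \<and> l = g @ q" if "g \<in> gain_edges T' c" "l \<in> loss_edges T' c" for g l
    using loss_below_gain[OF pp c that] .
next
  fix s assume "s \<in> S"
  then obtain p where "p \<in> positions T" "st T p = {c \<in> C. M s c}"
    using pp by (auto simp: persistent_phylogeny_def)
  with cover show "\<exists>p \<in> positions T'. st T' p = {c \<in> C. M s c}" by metis
qed

end

section \<open>Contracting a gain edge followed by a loss edge\<close>

fun replace_subtree :: "'c ptree \<Rightarrow> nat list \<Rightarrow> 'c ptree \<Rightarrow> 'c ptree" where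
  "replace_subtree t [] s = s"
| "replace_subtree (Node l ts) (i # p) s =
     (if i < length ts then Node l (ts[i := replace_subtree (ts ! i) p s]) else Node l ts)"

lemma subtree_at_replace_subtree_below:
  "subtree_at t x \<noteq> None \<Longrightarrow> subtree_at (replace_subtree t x s) (x @ r) = subtree_at s r"
proof (induction x arbitrary: t)
  case (Cons a x)
  then show ?case by (cases t) (auto split: if_splits)
qed simp

lemma state_at_replace_subtree_outside:
  "subtree_at t x \<noteq> None \<Longrightarrow> \<nexists>r. q = x @ r \<Longrightarrow> state_at (replace_subtree t x s) q = state_at t q"
proof (induction x arbitrary: t q)
  case (Cons a x)
  obtain l ts where t: "t = Node l ts" by (cases t)
  show ?case
  proof (cases q)
    case (Cons b q')
    with Cons.prems Cons.IH[of "ts ! a" q'] t show ?thesis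
      by (cases "b = a") (auto simp: state_at_def split: if_splits)
  qed (use Cons.prems t in \<open>auto simp: state_at_def split: if_splits\<close>)
qed simp

definition remove_nth :: "nat \<Rightarrow> 'a list \<Rightarrow> 'a list" where
  "remove_nth j xs = take j xs @ drop (Suc j) xs"

lemma length_remove_nth: "j < length xs \<Longrightarrow> length (remove_nth j xs) = length xs - 1"
  by (simp add: remove_nth_def)

lemma nth_remove_nth:
  "b < length xs - 1 \<Longrightarrow> remove_nth j xs ! b = (if b < j then xs ! b else xs ! Suc b)"
  by (auto simp: remove_nth_def nth_append min_def)

definition contract_grandchild :: "'c ptree \<Rightarrow> nat \<Rightarrow> nat \<Rightarrow> 'c ptree" where
  "contract_grandchild t i j =
     (case t of Node l ts \<Rightarrow> case ts ! i of Node l' vs \<Rightarrow> case vs ! j of Node _ ws \<Rightarrow>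
        Node l (ts[i := Node l' (remove_nth j vs)] @ ws))"

definition contract_at :: "'c ptree \<Rightarrow> nat list \<Rightarrow> nat \<Rightarrow> nat \<Rightarrow> 'c ptree" where
  "contract_at t x i j = replace_subtree t x (contract_grandchild (the (subtree_at t x)) i j)"

text \<open>In the contracted node the children of the removed grandchild get the indices \<open>n, n + 1, \<dots>\<close>
  after the \<open>n\<close> original children, and later siblings of the removed grandchild move one index
  down. \<open>uncontract_pos n i j\<close> maps a position of the contracted node back to its origin.\<close>

fun uncontract_pos :: "nat \<Rightarrow> nat \<Rightarrow> nat \<Rightarrow> nat list \<Rightarrow> nat list" where
  "uncontract_pos n i j [] = []"
| "uncontract_pos n i j (a # r) =
     (if n \<le> a then i # j # (a - n) # r
      else if a \<noteq> i then a # r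
      else case r of [] \<Rightarrow> [i] | b # r' \<Rightarrow> i # (if b < j then b else Suc b) # r')"

lemma uncontract_pos_eq_Nil_iff: "uncontract_pos n i j r = [] \<longleftrightarrow> r = []"
  by (cases r) (auto split: list.splits)

lemma inj_uncontract_pos: "inj (uncontract_pos n i j)"
proof (rule injI)
  fix r1 r2 assume "uncontract_pos n i j r1 = uncontract_pos n i j r2"
  then show "r1 = r2" by (cases r1; cases r2) (auto split: if_splits list.splits)
qed

lemma uncontract_pos_ne: "uncontract_pos n i j r \<noteq> [i, j]"
  by (cases r) (auto split: if_splits list.splits)

lemma butlast_uncontract_pos:
  "\<not> (\<exists>a. r = [a] \<and> n \<le> a) \<Longrightarrow> butlast (uncontract_pos n i j r) = uncontract_pos n i j (butlast r)"
  by (induction n i j r rule: uncontract_pos.induct) (auto split: list.splits)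

lemma uncontract_pos_surj:
  assumes "r \<noteq> [i, j]" "i < n" "\<And>a r'. r = a # r' \<Longrightarrow> a < n"
  shows "\<exists>r'. uncontract_pos n i j r' = r"
proof (cases r)
  case (Cons a r')
  show ?thesis
  proof (cases "a = i")
    case True
    show ?thesis
    proof (cases r')
      case (Cons b r'')
      consider "b < j" | "b = j" | "j < b" by linarith
      then show ?thesis
      proof cases
        case 2
        then obtain k r3 where "r'' = k # r3" using assms(1) Cons \<open>r = a # r'\<close> True
          by (cases r'') auto
        then show ?thesis using 2 Cons \<open>r = a # r'\<close> True
          by (intro exI[of _ "(n + k) # r3"]) simp
      next
        case 3
        then show ?thesis using Cons \<open>r = a # r'\<close> True assms(2)
          by (intro exI[of _ "i # (b - 1) # r''"]) simp
      qed (use Cons \<open>r = a # r'\<close> True assms in \<open>intro exI[of _ r], simp\<close>)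
    qed (use \<open>r = a # r'\<close> True assms in \<open>intro exI[of _ r], simp\<close>)
  qed (use Cons assms in \<open>intro exI[of _ r], simp\<close>)
qed (intro exI[of _ "[]"], simp)

lemma state_at_contract_grandchild:
  assumes i: "i < length ts" and ti: "ts ! i = Node l' vs" and j: "j < length vs"
  shows "state_at (contract_grandchild (Node l ts) i j) r
    = state_at (Node l ts) (uncontract_pos (length ts) i j r)"
proof -
  obtain l2 ws where vj: "vs ! j = Node l2 ws" by (cases "vs ! j")
  have t': "contract_grandchild (Node l ts) i j = Node l (ts[i := Node l' (remove_nth j vs)] @ ws)"
    by (simp add: contract_grandchild_def ti vj)
  show ?thesis
  proof (cases r)
    case (Cons a r')
    consider "length ts \<le> a" | "a < length ts" "a \<noteq> i" | "a = i" by linarith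
    then show ?thesis
    proof cases
      case 1
      with Cons i ti j vj show ?thesis by (auto simp: t' state_at_def nth_append)
    next
      case 2
      with Cons i show ?thesis by (simp add: t' state_at_def nth_append)
    next
      case 3
      show ?thesis
      proof (cases r')
        case Nil
        with Cons 3 i ti show ?thesis by (simp add: t' state_at_def nth_append)
      next
        case (Cons b r'')
        with \<open>r = a # r'\<close> 3 i ti j show ?thesis
          by (cases "b < length vs - 1")
            (auto simp: t' state_at_def nth_append length_remove_nth nth_remove_nth)
      qed
    qed
  qed (simp add: state_at_def t')
qed

definition relocate :: "nat list \<Rightarrow> (nat list \<Rightarrow> nat list) \<Rightarrow> nat list \<Rightarrow> nat list" where
  "relocate x f q = (if \<exists>r. q = x @ r then x @ f (drop (length x) q) else q)"

lemma relocate_append [simp]: "relocate x f (x @ r) = x @ f r"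
  by (simp add: relocate_def)

lemma relocate_outside [simp]: "\<nexists>r. q = x @ r \<Longrightarrow> relocate x f q = q"
  by (simp add: relocate_def)

lemma inj_relocate:
  assumes "inj f"
  shows "inj (relocate x f)"
proof (rule injI)
  fix q1 q2 assume eq: "relocate x f q1 = relocate x f q2"
  show "q1 = q2"
  proof (cases "\<exists>r. q1 = x @ r"; cases "\<exists>r. q2 = x @ r")
    assume "\<exists>r. q1 = x @ r" "\<exists>r. q2 = x @ r"
    then obtain r1 r2 where "q1 = x @ r1" "q2 = x @ r2" by blast
    with eq assms show ?thesis by (simp add: inj_eq)
  next
    assume "\<exists>r. q1 = x @ r" "\<nexists>r. q2 = x @ r"
    with eq show ?thesis by (metis relocate_append relocate_outside)
  next
    assume "\<nexists>r. q1 = x @ r" "\<exists>r. q2 = x @ r"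
    with eq show ?thesis by (metis relocate_append relocate_outside)
  next
    assume "\<nexists>r. q1 = x @ r" "\<nexists>r. q2 = x @ r"
    with eq show ?thesis by simp
  qed
qed

lemma relocate_eq_Nil_iff:
  assumes "\<And>r. f r = [] \<longleftrightarrow> r = []"
  shows "relocate x f q = [] \<longleftrightarrow> q = []"
proof (cases "\<exists>r. q = x @ r")
  case True
  then obtain r where "q = x @ r" by blast
  with assms show ?thesis by simp
qed simp

lemma butlast_relocate:
  assumes "\<And>r. f r = [] \<longleftrightarrow> r = []" "\<And>r. q = x @ r \<Longrightarrow> butlast (f r) = f (butlast r)"
  shows "butlast (relocate x f q) = relocate x f (butlast q)"
proof (cases "\<exists>r. q = x @ r")
  case True
  then obtain r where q: "q = x @ r" by blast
  show ?thesis
  proof (cases "r = []")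
    case True
    have "f [] = []" using assms(1) by simp
    then have "relocate x f q = x" using q True relocate_append[of x f "[]"] by simp
    moreover have "relocate x f (butlast x) = butlast x"
    proof (cases "x = []")
      case False
      have "length (butlast x) < length (x @ r)" for r
        using False by (cases x rule: rev_cases) auto
      then have "\<nexists>r. butlast x = x @ r" by (metis less_irrefl)
      then show ?thesis by simp
    qed (use \<open>f [] = []\<close> relocate_append[of "[]" f "[]"] in simp)
    ultimately show ?thesis using q True by simp
  next
    case False
    then have "f r \<noteq> []" using assms(1) by simp
    with False q assms(2) show ?thesis by (simp add: butlast_append)
  qed
next
  case False
  have "\<nexists>r. butlast q = x @ r"
  proof
    assume "\<exists>r. butlast q = x @ r"
    then obtain r where "butlast q = x @ r" by blast
    then have "q = x @ (if q = [] then r else r @ [last q])"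
      by (cases q rule: rev_cases) auto
    with False show False by blast
  qed
  with False show ?thesis by simp
qed

locale grandchild_contraction =
  fixes T :: "'c ptree" and x :: "nat list" and i j :: nat
    and l l' :: "'c set" and ts vs :: "'c ptree list"
  assumes at_x: "subtree_at T x = Some (Node l ts)"
    and child: "i < length ts" "ts ! i = Node l' vs"
    and grandchild: "j < length vs"
begin

abbreviation contracted :: "'c ptree" where
  "contracted \<equiv> contract_at T x i j"

abbreviation origin :: "nat list \<Rightarrow> nat list" where
  "origin \<equiv> relocate x (uncontract_pos (length ts) i j)"

lemma origin_eq_Nil_iff: "origin q = [] \<longleftrightarrow> q = []"
  by (simp add: relocate_eq_Nil_iff uncontract_pos_eq_Nil_iff)

lemma state_at_contracted: "state_at contracted q = state_at T (origin q)"
proof (cases "\<exists>r. q = x @ r")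
  case True
  then obtain r where q: "q = x @ r" by blast
  have "state_at contracted q = state_at (contract_grandchild (Node l ts) i j) r"
    using subtree_at_replace_subtree_below[of T x "contract_grandchild (Node l ts) i j" r] at_x q
    by (simp add: contract_at_def state_at_def)
  also have "\<dots> = state_at (Node l ts) (uncontract_pos (length ts) i j r)"
    by (rule state_at_contract_grandchild[OF child grandchild])
  also have "\<dots> = state_at T (x @ uncontract_pos (length ts) i j r)"
    using at_x by (simp add: state_at_def subtree_at_append)
  finally show ?thesis using q by simp
next
  case False
  then show ?thesis
    using state_at_replace_subtree_outside[of T x q] at_x by (simp add: contract_at_def)
qed

lemma origin_self: "origin x = x"
  using relocate_append[of x _ "[]"] by simp

lemma positions_contracted_iff: "q \<in> positions contracted \<longleftrightarrow> origin q \<in> positions T"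
  using state_at_contracted state_at_eq_None_iff by metis

lemma st_contracted: "q \<in> positions contracted \<Longrightarrow> st contracted q = st T (origin q)"
  using state_at_contracted state_at_position positions_contracted_iff by (metis option.inject)

lemma inj_origin: "inj origin"
  by (simp add: inj_relocate inj_uncontract_pos)

lemma card_positions_contracted: "card (positions contracted) < card (positions T)"
proof -
  have "card (positions contracted) = card (origin ` positions contracted)"
    using inj_origin by (simp add: card_image inj_on_subset)
  also have "\<dots> \<le> card (positions T - {x @ [i, j]})"
  proof (rule card_mono)
    show "origin ` positions contracted \<subseteq> positions T - {x @ [i, j]}"
      using positions_contracted_iff uncontract_pos_ne by (auto simp: relocate_def)
  qed (simp add: finite_positions)
  also have "\<dots> < card (positions T)"
  proof (rule card_Diff1_less[OF finite_positions])
    show "x @ [i, j] \<in> positions T"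
      using at_x child grandchild by (simp add: positions_def subtree_at_append)
  qed
  finally show ?thesis .
qed

context
  assumes stable: "st T (x @ [i, j]) = st T x"
begin

lemma st_butlast_contracted:
  assumes q: "q \<in> positions contracted"
  shows "st contracted (butlast q) = st T (butlast (origin q))"
proof (cases "\<exists>a. q = x @ [a] \<and> length ts \<le> a")
  case True
  \<comment> \<open>q was a child of the removed node, whose state equals that of its new parent x\<close>
  then obtain a where a: "q = x @ [a]" "length ts \<le> a" by blast
  then have "butlast (origin q) = x @ [i, j]" by (simp add: butlast_append)
  moreover have "st contracted (butlast q) = st T x"
    using st_contracted[OF butlast_in_positions[OF q]] a(1) origin_self by simp
  ultimately show ?thesis using stable by simp
next
  case False
  have "butlast (origin q) = origin (butlast q)"
  proof (rule butlast_relocate)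
    show "butlast (uncontract_pos (length ts) i j r) = uncontract_pos (length ts) i j (butlast r)"
      if "q = x @ r" for r
      using False that by (intro butlast_uncontract_pos) auto
  qed (rule uncontract_pos_eq_Nil_iff)
  then show ?thesis using st_contracted[OF butlast_in_positions[OF q]] by simp
qed

lemma tree_embedding_contracted: "tree_embedding contracted T origin"
proof
  show "inj_on origin (positions contracted)"
    by (rule inj_on_subset[OF inj_origin subset_UNIV])
  show "origin q \<in> positions T \<and> st contracted q = st T (origin q)"
    if "q \<in> positions contracted" for q
    using that positions_contracted_iff st_contracted by blast
  show "origin q \<in> tree_edges T \<and> st contracted (butlast q) = st T (butlast (origin q))"
    if "q \<in> tree_edges contracted" for q
    using that positions_contracted_iff origin_eq_Nil_iff st_butlast_contracted
    by (auto simp: tree_edges_def)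
  have "[] \<in> positions contracted" by (simp add: positions_def)
  moreover have "origin [] = []" by (simp add: origin_eq_Nil_iff)
  ultimately show "st contracted [] = st T []" using st_contracted by metis
qed

lemma contracted_covers:
  assumes p: "p \<in> positions T"
  shows "\<exists>q \<in> positions contracted. st contracted q = st T p"
proof (cases "p = x @ [i, j]")
  case True
  have "x \<in> positions contracted"
    using positions_contracted_iff origin_self at_x by (simp add: positions_def)
  moreover have "st contracted x = st T p"
    using st_contracted[OF \<open>x \<in> positions contracted\<close>] origin_self stable True by simp
  ultimately show ?thesis by blast
next
  case False
  have "\<exists>q. origin q = p"
  proof (cases "\<exists>r. p = x @ r")
    case True
    then obtain r where r: "p = x @ r" by blast
    have "subtree_at (Node l ts) r \<noteq> None"
      using p r at_x by (simp add: positions_def subtree_at_append)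
    then have "a < length ts" if "r = a # r'" for a r'
      using that by (auto split: if_splits)
    then obtain r' where "uncontract_pos (length ts) i j r' = r"
      using uncontract_pos_surj[of r i j "length ts"] False r child(1) by auto
    with r show ?thesis by (intro exI[of _ "x @ r'"]) simp
  next
    case False
    then show ?thesis by (intro exI[of _ p]) simp
  qed
  then show ?thesis using p st_contracted positions_contracted_iff by metis
qed

end

end

lemma st_gain_then_loss:
  assumes pp: "persistent_phylogeny S C M A T"
    and g: "p \<in> gain_edges T c" and l: "p @ [j] \<in> loss_edges T c"
  shows "st T (p @ [j]) = st T (butlast p)"
proof -
  have "card (edge_labels T p) = 1" "card (edge_labels T (p @ [j])) = 1"
    using pp g l by (auto simp: persistent_phylogeny_def gain_edges_def loss_edges_def)
  moreover have "c \<in> edge_labels T p" "c \<in> edge_labels T (p @ [j])"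
    using g l by (auto simp: gain_edges_def loss_edges_def edge_labels_def)
  ultimately have "edge_labels T p = {c}" "edge_labels T (p @ [j]) = {c}"
    by (metis card_1_singletonE singletonD)+
  with g l show ?thesis
    by (auto simp: edge_labels_def gain_edges_def loss_edges_def)
qed

lemma persistent_phylogeny_contract:
  assumes pp: "persistent_phylogeny S C M A T"
    and g: "p \<in> gain_edges T c" and l: "p @ [j] \<in> loss_edges T c"
  obtains T' where "persistent_phylogeny S C M A T'" "card (positions T') < card (positions T)"
proof -
  define x i where "x = butlast p" and "i = last p"
  have p: "p = x @ [i]"
    using g by (simp add: x_def i_def gain_edges_def tree_edges_def)
  have "x @ [i, j] \<in> positions T"
    using l p by (simp add: loss_edges_def tree_edges_def)
  then obtain t0 where at_x: "subtree_at T x = Some t0" "subtree_at t0 [i, j] \<noteq> None"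
    by (auto simp: positions_def subtree_at_append split: option.splits)
  obtain l0 ts where t0: "t0 = Node l0 ts" by (cases t0)
  with at_x have i: "i < length ts" by (auto split: if_splits)
  obtain l' vs where ti: "ts ! i = Node l' vs" by (cases "ts ! i")
  with at_x t0 i have j: "j < length vs" by (auto split: if_splits)
  interpret grandchild_contraction T x i j l0 l' ts vs
    by unfold_locales (use at_x(1) t0 i ti j in simp_all)
  have "st T (p @ [j]) = st T x"
    using st_gain_then_loss[OF pp g l] by (simp add: x_def)
  then have stable: "st T (x @ [i, j]) = st T x" using p by simp
  have "persistent_phylogeny S C M A contracted"
    by (rule tree_embedding.persistent_phylogeny_pullback[OF tree_embedding_contracted[OF stable] pp
          contracted_covers[OF stable]])
  then show ?thesis by (rule that[OF _ card_positions_contracted])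
qed

lemma persistent_phylogeny_normal_form:
  "persistent_phylogeny S C M A T \<Longrightarrow> \<exists>T'. persistent_phylogeny S C M A T' \<and> normal_form T'"
proof (induction "card (positions T)" arbitrary: T rule: less_induct)
  case less
  show ?case
  proof (cases "normal_form T")
    case False
    then obtain p j c where g: "p \<in> gain_edges T c" and l: "p @ [j] \<in> loss_edges T c"
      unfolding normal_form_def by blast
    obtain T1 where "persistent_phylogeny S C M A T1" "card (positions T1) < card (positions T)"
      by (rule persistent_phylogeny_contract[OF less.prems g l])
    then show ?thesis by (intro less.hyps)
  qed (use less.prems in blast)
qed

theorem lemma6:
  fixes GM :: "('s, 'c) rbgraph" and TM :: "'c ptree"
  assumes "wf_rbgraph GM"
    and "standing_assumptions GM"
    and "maximal_reducible GM"
    and "solves TM GM"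
  shows "\<exists>T'. solves T' GM \<and> normal_form T'"
  using persistent_phylogeny_normal_form assms(4) unfolding solves_def .

end
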